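(* For every even integer $t \ge 4$, the sequence $\left(\left\lfloor n^t/24 \right\rfloor\right)_{n \ge 1}$ is eventually prime-free.
   Context: A sequence $(a_n)_{n\ge 1}$ of positive integers is called eventually prime-free if there exists an index $n_0$ such that $a_n$ is composite for all $n \ge n_0$. (Here, as in the paper, this is understood as: only finitely many terms $a_n$ are prime.) *)

theory Defs
  imports Main "HOL-Computational_Algebra.Primes"
begin

definition eventually_prime_free :: "(nat \<Rightarrow> nat) \<Rightarrow> bool" where
  "eventually_prime_free a \<longleftrightarrow> finite {n. n \<ge> 1 \<and> prime (a n)}"

end

theory Submission
  imports Defs "HOL-Number_Theory.Pocklington"
begin

text \<open>Write n^t = m^2 with m = n^(t/2); as t \<ge> 4, m is odd or divisible by 4.
  If 4 divides m, then m^2 mod 48 is 0 or 16, so m^2 div 24 = 2 (m^2 div 48).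
  If m is an odd multiple of 3, then m^2 mod 72 = 9, so m^2 div 24 = 3 (m^2 div 72).
  Otherwise m is prime to 6, so 24 divides m^2 - 1 = (m - 1)(m + 1) and the factor 24
  splits between m - 1 and m + 1. In every case m^2 div 24 is a product of two factors
  at least 2 once n is large.\<close>

lemma not_prime_mult_nat:
  fixes a b :: nat
  assumes "2 \<le> a" "2 \<le> b"
  shows "\<not> prime (a * b)"
  using prime_product[of a b] assms by auto

lemma div_eq_mult_div_if_mod_less:
  fixes y b c :: nat
  assumes "y mod (b * c) < b"
  shows "y div b = c * (y div (b * c))"
proof -
  have "b * (y div b mod c) < b"
    using assms mod_mult2_eq[of y b c] by linarith
  then have "c dvd y div b"
    by (simp add: dvd_eq_mod_eq_0)
  then show ?thesis
    by (simp add: div_mult2_eq)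
qed

lemma not_prime_div_if_mod_less:
  fixes y b c :: nat
  assumes "y mod (b * c) < b" "2 \<le> c" "2 * (b * c) \<le> y"
  shows "\<not> prime (y div b)"
proof -
  have "b * c > 0"
    using assms(1,2) by (cases "b = 0") auto
  then have "2 \<le> y div (b * c)"
    using div_le_mono[OF assms(3), of "b * c"] by simp
  then show ?thesis
    using div_eq_mult_div_if_mod_less[OF assms(1)] not_prime_mult_nat assms(2) by metis
qed

lemma not_prime_mult_div:
  fixes d x y :: nat
  assumes "d dvd x * y" "0 < d" "2 * d \<le> x" "2 * d \<le> y"
  shows "\<not> prime (x * y div d)"
proof -
  obtain a b where d: "d = a * b" and "a dvd x" "b dvd y"
    using division_decomp[OF assms(1)] by blast
  have "0 < a" "a \<le> d" "0 < b" "b \<le> d"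
    using assms(2) d by (auto intro: dvd_imp_le)
  have "x * y div d = (x div a) * (y div b)"
    using \<open>a dvd x\<close> \<open>b dvd y\<close> d by (auto elim!: dvdE)
  moreover have "2 \<le> x div a"
    using div_le_mono2[OF \<open>0 < a\<close> \<open>a \<le> d\<close>, of x] div_le_mono[OF assms(3), of d] assms(2) by simp
  moreover have "2 \<le> y div b"
    using div_le_mono2[OF \<open>0 < b\<close> \<open>b \<le> d\<close>, of y] div_le_mono[OF assms(4), of d] assms(2) by simp
  ultimately show ?thesis
    using not_prime_mult_nat by metis
qed

lemma square_mod_3:
  fixes m :: nat
  shows "m\<^sup>2 mod 3 = (if 3 dvd m then 0 else 1)"
proof -
  have "m mod 3 = 0 \<or> m mod 3 = 1 \<or> m mod 3 = 2"
    by arith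
  moreover have "m\<^sup>2 mod 3 = (m mod 3)\<^sup>2 mod 3"
    by (simp add: power_mod)
  ultimately show ?thesis
    by (auto simp: dvd_eq_mod_eq_0 power2_eq_square)
qed

lemma odd_square_mod_8:
  fixes m :: nat
  assumes "odd m"
  shows "m\<^sup>2 mod 8 = 1"
  using square_mod_8_eq_1_iff[of m] assms by (simp add: cong_def)

lemma square_div_24_not_prime:
  fixes m :: nat
  assumes "odd m \<or> 4 dvd m" "49 \<le> m"
  shows "\<not> prime (m\<^sup>2 div 24)"
proof -
  have "49 * 49 \<le> m\<^sup>2"
    using mult_le_mono[OF assms(2) assms(2)] by (simp add: power2_eq_square)
  then have large: "2401 \<le> m\<^sup>2" by simp
  consider (four_dvd) "4 dvd m" | (three_dvd) "odd m" "3 dvd m" | (coprime_6) "odd m" "\<not> 3 dvd m"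
    using assms(1) by blast
  then show ?thesis
  proof cases
    case four_dvd
    then obtain k where "m = 4 * k" by blast
    then have "m\<^sup>2 mod (24 * 2) = 16 * (k\<^sup>2 mod 3)"
      by (simp add: power_mult_distrib mod_mult_mult1[of 16 "k\<^sup>2" 3, symmetric])
    also have "\<dots> < 24"
      by (simp add: square_mod_3)
    finally show ?thesis
      using not_prime_div_if_mod_less[of "m\<^sup>2" 24 2] large by simp
  next
    case three_dvd
    then obtain k where "m = 3 * k" "odd k" by auto
    then have "m\<^sup>2 mod (24 * 3) = 9 * (k\<^sup>2 mod 8)"
      by (simp add: power_mult_distrib mod_mult_mult1[of 9 "k\<^sup>2" 8, symmetric])
    also have "\<dots> < 24"
      by (simp add: odd_square_mod_8 \<open>odd k\<close>)
    finally show ?thesis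
      using not_prime_div_if_mod_less[of "m\<^sup>2" 24 3] large by simp
  next
    case coprime_6
    have "8 dvd m\<^sup>2 - 1"
      using dvd_minus_mod[of 8 "m\<^sup>2"] odd_square_mod_8[OF \<open>odd m\<close>] by metis
    moreover have "3 dvd m\<^sup>2 - 1"
      using dvd_minus_mod[of 3 "m\<^sup>2"] square_mod_3[of m] \<open>\<not> 3 dvd m\<close> by metis
    moreover have "coprime (8 :: nat) 3"
      by code_simp
    ultimately have "24 dvd m\<^sup>2 - 1"
      using divides_mult[of 8 "m\<^sup>2 - 1" 3] by simp
    moreover have factor: "m\<^sup>2 - 1 = (m - 1) * (m + 1)"
      by (simp add: power2_eq_square algebra_simps)
    ultimately have "24 dvd (m - 1) * (m + 1)"
      by simp
    moreover from this have "m\<^sup>2 div 24 = (m - 1) * (m + 1) div 24"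
      using factor large by (auto elim!: dvdE)
    ultimately show ?thesis
      using not_prime_mult_div[of 24 "m - 1" "m + 1"] assms(2) by simp
  qed
qed

theorem theorem6:
  fixes t :: nat
  assumes "even t" and "t \<ge> 4"
  shows "eventually_prime_free (\<lambda>n. n ^ t div 24)"
proof -
  obtain s where t: "t = 2 * s" and "2 \<le> s"
    using assms by auto
  have "\<not> prime (n ^ t div 24)" if "49 \<le> n" for n :: nat
  proof -
    have "n ^ t = (n ^ s)\<^sup>2"
      by (simp add: t power_mult mult.commute)
    moreover have "n \<le> n ^ s"
      using \<open>2 \<le> s\<close> that by (simp add: self_le_power)
    moreover have "odd (n ^ s) \<or> 4 dvd n ^ s"
      using le_imp_power_dvd[OF \<open>2 \<le> s\<close>, of n] by (auto elim!: evenE simp: power_mult_distrib)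
    ultimately show ?thesis
      using square_div_24_not_prime[of "n ^ s"] that by simp
  qed
  then have "{n. n \<ge> 1 \<and> prime (n ^ t div 24)} \<subseteq> {..<49 :: nat}"
    by (auto simp: not_le[symmetric])
  then show ?thesis
    unfolding eventually_prime_free_def by (rule finite_subset) simp
qed

end
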